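(* Let $\mathbf{F}_q$ be a finite field of characteristic $p$ and $b\in\mathbf{F}_q$. For $1\le k\le q-1$, $$N(k,b,\mathbf{F}_q^* )=\frac1q\binom{q-1}{k}+(-1)^{k+\lfloor k/p\rfloor}\frac{v(b)}{q}\binom{q/p-1}{\lfloor k/p\rfloor}.$$ For $1\le k\le q$: if $p\nmid k$ then $N(k,b,\mathbf{F}_q)=\frac1q\binom qk$; if $p\mid k$ then $$N(k,b,\mathbf{F}_q)=\frac1q\binom qk+(-1)^{k+k/p}\frac{v(b)}{q}\binom{q/p}{k/p}.$$
   Context: $N(k,b,D)$ denotes the number of $k$-element subsets $\{x_1,\dots,x_k\}\subseteq D$ with $x_1+\dots+x_k=b$. $v(b)=-1$ if $b\ne0$ and $v(b)=q-1$ if $b=0$. Binomial coefficients $\binom{x}{m}=x(x-1)\cdots(x-m+1)/m!$ for real $x$, integer $m\ge0$. *)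

theory Defs
  imports Complex_Main "HOL-Library.Cardinality"
begin

definition Nsub :: "nat \<Rightarrow> 'a::comm_monoid_add \<Rightarrow> 'a set \<Rightarrow> nat" where
  "Nsub k b D = card {S. S \<subseteq> D \<and> card S = k \<and> finite S \<and> (\<Sum>x\<in>S. x) = b}"

definition vq :: "'a::{finite,zero} \<Rightarrow> real" where
  "vq b = (if b = 0 then real CARD('a) - 1 else -1)"

end

theory Submission imports Defs begin

(* Two symmetries drive it:
   translating a k-set by t moves its sum by k*t, so
   (1) if p does not divide k, the k-subsets of F_q are equidistributed over the
       q possible sums, giving q * N(k,b,F_q) = C(q,k);
   (2) if p divides k, all "punctured" sets F_q - {t} carry the same counts, and
       double counting pairs (S,t) with t not in S gives q * N(k,b,F_q^* ) = (q-k) * N(k,b,F_q).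
   Splitting off the element 0 gives N(k,b,F_q) = N(k,b,F_q^* ) + N(k-1,b,F_q^* ).
   Hence the sequence A_k = N(k,b,F_q^* ) obeys a first-order recurrence (additive when
   p does not divide k, multiplicative when it does) with A_0 = [b = 0].  The claimed closed
   form satisfies the same recurrence (binomial absorption identities), so the formula for
   F_q^* follows by induction on k, and the formula for F_q follows from the splitting. *)


definition ksubsets_sum :: "nat \<Rightarrow> 'a::comm_monoid_add \<Rightarrow> 'a set \<Rightarrow> 'a set set" where
  "ksubsets_sum k b D = {S. S \<subseteq> D \<and> card S = k \<and> finite S \<and> (\<Sum>x\<in>S. x) = b}"

lemma Nsub_eq_card: "Nsub k b D = card (ksubsets_sum k b D)"
  by (simp add: Nsub_def ksubsets_sum_def)

lemma Nsub_zero: "Nsub 0 b D = (if b = 0 then 1 else 0)"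
proof -
  have "ksubsets_sum 0 b D = (if b = 0 then {{}} else {})"
    by (auto simp: ksubsets_sum_def)
  then show ?thesis by (simp add: Nsub_eq_card)
qed

lemma translate_card_sum:
  fixes t :: "'a::comm_ring_1"
  assumes "finite S"
  shows "card ((\<lambda>x. x + t) ` S) = card S"
    and "(\<Sum>x\<in>(\<lambda>x. x + t) ` S. x) = (\<Sum>x\<in>S. x) + of_nat (card S) * t"
proof -
  have inj: "inj_on (\<lambda>x. x + t) S" by (simp add: inj_on_def)
  then show "card ((\<lambda>x. x + t) ` S) = card S" by (rule card_image)
  have "(\<Sum>x\<in>(\<lambda>x. x + t) ` S. x) = (\<Sum>x\<in>S. x + t)"
    using inj by (simp add: sum.reindex)
  then show "(\<Sum>x\<in>(\<lambda>x. x + t) ` S. x) = (\<Sum>x\<in>S. x) + of_nat (card S) * t"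
    by (simp add: sum.distrib)
qed

lemma translate_ksubsets_sum:
  fixes t :: "'a::comm_ring_1"
  shows "image (\<lambda>x. x + t) ` ksubsets_sum k b D
           \<subseteq> ksubsets_sum k (b + of_nat k * t) ((\<lambda>x. x + t) ` D)"
  using translate_card_sum[of _ t] by (auto simp: ksubsets_sum_def)

lemma Nsub_translate:
  fixes t :: "'a::comm_ring_1"
  shows "Nsub k b D = Nsub k (b + of_nat k * t) ((\<lambda>x. x + t) ` D)"
  unfolding Nsub_eq_card
proof (rule bij_betw_same_card, rule bij_betw_byWitness[where f' = "image (\<lambda>x. x + - t)"])
  show "image (\<lambda>x. x + t) ` ksubsets_sum k b D
          \<subseteq> ksubsets_sum k (b + of_nat k * t) ((\<lambda>x. x + t) ` D)"
    by (rule translate_ksubsets_sum)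
  have "image (\<lambda>x. x + - t) ` ksubsets_sum k (b + of_nat k * t) ((\<lambda>x. x + t) ` D)
          \<subseteq> ksubsets_sum k (b + of_nat k * t + of_nat k * - t)
               ((\<lambda>x. x + - t) ` (\<lambda>x. x + t) ` D)"
    by (rule translate_ksubsets_sum)
  then show "image (\<lambda>x. x + - t) ` ksubsets_sum k (b + of_nat k * t) ((\<lambda>x. x + t) ` D)
               \<subseteq> ksubsets_sum k b D"
    by (simp add: image_image)
qed (simp_all add: image_image)

text \<open>Splitting off the element \<open>0\<close>: a \<open>k\<close>-set containing \<open>0\<close> is a \<open>(k-1)\<close>-set avoiding
  \<open>0\<close> plus the element \<open>0\<close>, which does not change the sum.\<close>
lemma Nsub_remove_zero:
  fixes D :: "'a::{finite,comm_monoid_add} set"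
  assumes "0 \<in> D" "k \<ge> 1"
  shows "Nsub k b D = Nsub k b (D - {0}) + Nsub (k - 1) b (D - {0})"
proof -
  let ?X = "ksubsets_sum k b D"
  have with_zero: "card {S\<in>?X. 0 \<in> S} = card (ksubsets_sum (k - 1) b (D - {0}))"
  proof (rule bij_betw_same_card[of "\<lambda>S. S - {0}"],
         rule bij_betw_byWitness[where f' = "insert 0"])
    show "insert 0 ` ksubsets_sum (k - 1) b (D - {0}) \<subseteq> {S\<in>?X. 0 \<in> S}"
      using assms by (auto simp: ksubsets_sum_def card_insert_if sum.insert_if)
  qed (use assms in \<open>auto simp: ksubsets_sum_def sum.remove[of _ 0]\<close>)
  have "?X = ksubsets_sum k b (D - {0}) \<union> {S\<in>?X. 0 \<in> S}"
    by (auto simp: ksubsets_sum_def)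
  moreover have "ksubsets_sum k b (D - {0}) \<inter> {S\<in>?X. 0 \<in> S} = {}"
    by (auto simp: ksubsets_sum_def)
  ultimately have "card ?X = card (ksubsets_sum k b (D - {0})) + card {S\<in>?X. 0 \<in> S}"
    by (metis card_Un_disjoint finite)
  then show ?thesis using with_zero by (simp add: Nsub_eq_card)
qed

text \<open>Summing over all targets counts every \<open>k\<close>-subset of \<open>D\<close> exactly once.\<close>
lemma Nsub_sum_over_targets:
  fixes D :: "'a::{finite,comm_monoid_add} set"
  shows "(\<Sum>b\<in>UNIV. Nsub k b D) = card D choose k"
proof -
  have "{S. S \<subseteq> D \<and> card S = k} = (\<Union>b\<in>UNIV. ksubsets_sum k b D)"
    by (auto simp: ksubsets_sum_def)
  then have "card D choose k = card (\<Union>b\<in>UNIV. ksubsets_sum k b D)"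
    by (metis n_subsets finite)
  also have "\<dots> = (\<Sum>b\<in>UNIV. Nsub k b D)"
    unfolding Nsub_eq_card by (rule card_UN_disjoint) (auto simp: ksubsets_sum_def)
  finally show ?thesis by simp
qed

lemma sum_card_avoiding:
  fixes X :: "'a::finite set set"
  assumes "\<And>S. S \<in> X \<Longrightarrow> card S = k"
  shows "(\<Sum>t\<in>UNIV. card {S\<in>X. t \<notin> S}) = (CARD('a) - k) * card X"
proof -
  have "(\<Sum>t\<in>UNIV. card {S\<in>X. t \<notin> S}) = (\<Sum>t\<in>UNIV. \<Sum>S\<in>X. if t \<notin> S then 1 else 0)"
    by (simp add: sum.inter_filter[symmetric])
  also have "\<dots> = (\<Sum>S\<in>X. \<Sum>t\<in>UNIV. if t \<notin> S then 1 else 0)"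
    by (rule sum.swap)
  also have "\<dots> = (\<Sum>S\<in>X. card (UNIV - S))"
    by (intro sum.cong refl) (simp add: sum.If_cases set_diff_eq)
  also have "\<dots> = (\<Sum>S\<in>X. CARD('a) - k)"
    using assms by (intro sum.cong) (simp_all add: card_Diff_subset)
  finally show ?thesis by simp
qed


subsection \<open>Counting in a finite field\<close>

text \<open>If \<open>p \<nmid> k\<close>, translation by \<open>(c - b)/k\<close> maps the \<open>k\<close>-subsets with sum \<open>b\<close> onto those with
  sum \<open>c\<close>: the counts do not depend on the target.\<close>
lemma Nsub_UNIV_target_independent:
  fixes b c :: "'a::{finite,field}"
  assumes "\<not> CHAR('a) dvd k"
  shows "Nsub k b UNIV = Nsub k c UNIV"
proof -
  have k: "of_nat k \<noteq> (0::'a)" using assms of_nat_eq_0_iff_char_dvd by blast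
  have "(\<lambda>x. x + t) ` (UNIV::'a set) = UNIV" for t
    by (auto intro!: image_eqI[where x = "_ - t"])
  then show ?thesis using Nsub_translate[of k b UNIV "(c - b) / of_nat k"] k by simp
qed

lemma Nsub_UNIV_not_dvd:
  fixes b :: "'a::{finite,field}"
  assumes "\<not> CHAR('a) dvd k"
  shows "real (Nsub k b UNIV) = real (CARD('a) choose k) / real CARD('a)"
proof -
  have "CARD('a) choose k = (\<Sum>c\<in>UNIV. Nsub k (c::'a) UNIV)"
    using Nsub_sum_over_targets[of k "UNIV::'a set"] by simp
  also have "\<dots> = (\<Sum>c\<in>(UNIV::'a set). Nsub k b UNIV)"
    by (intro sum.cong refl Nsub_UNIV_target_independent[OF assms])
  also have "\<dots> = CARD('a) * Nsub k b UNIV"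
    by simp
  finally show ?thesis by (simp add: field_simps)
qed

text \<open>If \<open>p \<mid> k\<close>, then \<open>k * t = 0\<close>, so all punctured fields \<open>F_q - {t}\<close> give the same count
  as \<open>F_q^*\<close>; double counting then relates the punctured and the full count.\<close>
lemma Nsub_punctured_dvd:
  fixes b :: "'a::{finite,field}"
  assumes "CHAR('a) dvd k"
  shows "CARD('a) * Nsub k b (UNIV - {0}) = (CARD('a) - k) * Nsub k b UNIV"
proof -
  let ?X = "ksubsets_sum k b (UNIV::'a set)"
  have k: "of_nat k = (0::'a)" using assms of_nat_eq_0_iff_char_dvd by blast
  have avoiding_t: "Nsub k b (UNIV - {0}) = card {S\<in>?X. t \<notin> S}" for t :: 'a
  proof -
    have "(\<lambda>x. x + t) ` (UNIV - {0}) = UNIV - {t}"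
      by (auto intro!: image_eqI[where x = "_ - t"])
    then have "Nsub k b (UNIV - {0}) = Nsub k b (UNIV - {t})"
      using Nsub_translate[of k b "UNIV - {0}" t] k by simp
    also have "\<dots> = card {S\<in>?X. t \<notin> S}"
      unfolding Nsub_eq_card by (rule arg_cong[where f = card]) (auto simp: ksubsets_sum_def)
    finally show ?thesis .
  qed
  have "CARD('a) * Nsub k b (UNIV - {0}) = (\<Sum>t\<in>(UNIV::'a set). card {S\<in>?X. t \<notin> S})"
    by (simp add: avoiding_t[symmetric])
  also have "\<dots> = (CARD('a) - k) * card ?X"
    by (rule sum_card_avoiding) (simp add: ksubsets_sum_def)
  finally show ?thesis by (simp add: Nsub_eq_card)
qed

lemma Nsub_punctured_step_not_dvd:
  fixes b :: "'a::{finite,field}"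
  assumes "\<not> CHAR('a) dvd Suc k"
  shows "real (Nsub (Suc k) b (UNIV - {0})) + real (Nsub k b (UNIV - {0}))
           = real (CARD('a) choose Suc k) / real CARD('a)"
  using Nsub_remove_zero[of "UNIV::'a set" "Suc k" b] Nsub_UNIV_not_dvd[OF assms, of b]
  by simp

lemma Nsub_punctured_step_dvd:
  fixes b :: "'a::{finite,field}"
  assumes "CHAR('a) dvd Suc k" "Suc k \<le> CARD('a)"
  shows "real (Suc k) * real (Nsub (Suc k) b (UNIV - {0}))
           = (real CARD('a) - real (Suc k)) * real (Nsub k b (UNIV - {0}))"
proof -
  let ?A = "\<lambda>j. real (Nsub j b (UNIV - {0}))"
  have "real CARD('a) * ?A (Suc k) = (real CARD('a) - real (Suc k)) * real (Nsub (Suc k) b UNIV)"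
    using arg_cong[OF Nsub_punctured_dvd[OF assms(1), of b], of real] assms(2)
    by (simp add: of_nat_diff)
  also have "real (Nsub (Suc k) b UNIV) = ?A (Suc k) + ?A k"
    using Nsub_remove_zero[of "UNIV::'a set" "Suc k" b] by simp
  finally show ?thesis by (simp add: algebra_simps)
qed


subsection \<open>The closed form and its recurrences\<close>

definition punctured_count :: "nat \<Rightarrow> nat \<Rightarrow> real \<Rightarrow> nat \<Rightarrow> real" where
  "punctured_count q p v k =
     1 / real q * real ((q - 1) choose k)
     + (-1) ^ (k + k div p) * (v / real q) * ((real q / real p - 1) gchoose (k div p))"

lemma gbinomial_Suc_ratio:
  fixes a :: "'a::field_char_0"
  shows "of_nat (Suc j) * (a gchoose Suc j) = (a - of_nat j) * (a gchoose j)"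
  using gbinomial_mult_1[of a j] by (simp add: algebra_simps)

lemma Suc_div_not_dvd: "\<not> (p::nat) dvd Suc k \<Longrightarrow> Suc k div p = k div p"
  by (simp add: div_Suc dvd_eq_mod_eq_0)

lemma Suc_div_dvd: "(p::nat) dvd Suc k \<Longrightarrow> Suc k div p = Suc (k div p)"
  by (simp add: div_Suc dvd_eq_mod_eq_0)

lemma punctured_count_0:
  assumes "q > 0"
  shows "punctured_count q p v 0 = (1 + v) / real q"
  using assms by (simp add: punctured_count_def add_divide_distrib)

text \<open>When \<open>p \<nmid> k + 1\<close> the sign terms of consecutive values cancel and Pascal's rule remains.\<close>
lemma punctured_count_step_not_dvd:
  assumes "\<not> p dvd Suc k" "q > 0"
  shows "punctured_count q p v (Suc k) + punctured_count q p v k = real (q choose Suc k) / real q"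
proof -
  have pascal: "q choose Suc k = ((q - 1) choose Suc k) + ((q - 1) choose k)"
    using assms(2) by (cases q) auto
  show ?thesis
    unfolding punctured_count_def Suc_div_not_dvd[OF assms(1)] pascal
    by (simp add: add_divide_distrib)
qed

text \<open>When \<open>p \<mid> k + 1 = p m\<close>, both summands obey \<open>(k+1) f(k+1) = (q - (k+1)) f(k)\<close>:
  for the binomial part by absorption in \<open>C(q-1, .)\<close>, for the sign part by absorption in
  \<open>C(q/p - 1, .)\<close> after multiplying by \<open>p\<close>.\<close>
lemma punctured_count_step_dvd:
  assumes "p dvd Suc k" "p > 0" "Suc k \<le> q"
  shows "real (Suc k) * punctured_count q p v (Suc k)
           = (real q - real (Suc k)) * punctured_count q p v k"
proof -
  define j where "j = k div p"
  define a where "a = real q / real p - 1"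
  have Suc_k: "real (Suc k) = real p * real (Suc j)"
    using assms(1,2) Suc_div_dvd[OF assms(1)] unfolding j_def
    by (metis dvd_mult_div_cancel of_nat_mult)
  have binomial_part:
    "real (Suc k) * real ((q - 1) choose Suc k) = (real q - real (Suc k)) * real ((q - 1) choose k)"
    using gbinomial_Suc_ratio[of k "real (q - 1)"] assms(3)
    by (simp add: binomial_gbinomial of_nat_diff)
  have sign_part:
    "real (Suc k) * (a gchoose Suc j) = (real q - real (Suc k)) * (a gchoose j)"
  proof -
    have "real (Suc k) * (a gchoose Suc j) = (real p * (a - real j)) * (a gchoose j)"
      unfolding Suc_k using gbinomial_Suc_ratio[of j a] by simp
    also have "real p * (a - real j) = real q - real (Suc k)"
      unfolding a_def Suc_k using assms(2) by (simp add: field_simps)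
    finally show ?thesis by simp
  qed
  define s where "s = (-1::real) ^ (k + j)"
  have sign: "(-1::real) ^ (Suc k + Suc j) = s" unfolding s_def by simp
  have "real (Suc k) * punctured_count q p v (Suc k)
          = 1 / real q * (real (Suc k) * real ((q - 1) choose Suc k))
            + s * (v / real q) * (real (Suc k) * (a gchoose Suc j))"
    unfolding punctured_count_def Suc_div_dvd[OF assms(1)] j_def[symmetric] a_def[symmetric] sign
    by (simp add: algebra_simps add_divide_distrib)
  also have "\<dots> = 1 / real q * ((real q - real (Suc k)) * real ((q - 1) choose k))
                   + s * (v / real q) * ((real q - real (Suc k)) * (a gchoose j))"
    by (simp only: binomial_part sign_part)
  also have "\<dots> = (real q - real (Suc k))
                     * (1 / real q * real ((q - 1) choose k) + s * (v / real q) * (a gchoose j))"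
    by (simp add: distrib_left mult_ac)
  also have "\<dots> = (real q - real (Suc k)) * punctured_count q p v k"
    unfolding punctured_count_def j_def[symmetric] a_def[symmetric] s_def ..
  finally show ?thesis .
qed

text \<open>When \<open>p \<mid> k\<close>, consecutive values add up to the claimed count over all of \<open>F_q\<close>
  (Pascal's rule for both binomial coefficients).\<close>
lemma punctured_count_add_pred:
  assumes "p dvd k" "k \<ge> 1" "q > 0"
  shows "punctured_count q p v k + punctured_count q p v (k - 1)
           = 1 / real q * real (q choose k)
             + (-1) ^ (k + k div p) * (v / real q) * ((real q / real p) gchoose (k div p))"
proof -
  define j where "j = (k - 1) div p"
  have div_k: "k div p = Suc j"
    using assms(1,2) Suc_div_dvd[of p "k - 1"] unfolding j_def by simp
  have sign: "(-1::real) ^ (k - 1 + j) = (-1) ^ (k + Suc j)"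
    using assms(2) by (cases k) simp_all
  have pascal: "q choose k = ((q - 1) choose k) + ((q - 1) choose (k - 1))"
    using assms(2,3) by (cases q; cases k) auto
  have gpascal: "(real q / real p) gchoose Suc j
                   = ((real q / real p - 1) gchoose j) + ((real q / real p - 1) gchoose Suc j)"
    using gbinomial_reduce_nat[of "Suc j" "real q / real p"] by simp
  show ?thesis
    unfolding punctured_count_def div_k j_def[symmetric] sign pascal gpascal
    by (simp add: algebra_simps add_divide_distrib)
qed


text \<open>Induction on \<open>k\<close>: \<open>N(k, b, F_q^*)\<close> and the closed form agree at \<open>k = 0\<close> and satisfy the
  same recurrence, whose step is additive or multiplicative according to whether \<open>p\<close>
  divides \<open>k + 1\<close>.\<close>
lemma Nsub_punctured_closed_form:
  fixes b :: "'a::{finite,field}"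
  assumes "k \<le> CARD('a)"
  shows "real (Nsub k b (UNIV - {0})) = punctured_count CARD('a) CHAR('a) (vq b) k"
  using assms
proof (induction k)
  case 0
  then show ?case by (simp add: Nsub_zero punctured_count_0 vq_def)
next
  case (Suc k)
  let ?A = "\<lambda>j. real (Nsub j b (UNIV - {0}))"
  let ?f = "punctured_count CARD('a) CHAR('a) (vq b)"
  have IH: "?A k = ?f k" using Suc by simp
  show ?case
  proof (cases "CHAR('a) dvd Suc k")
    case False
    have "?f (Suc k) + ?f k = real (CARD('a) choose Suc k) / real CARD('a)"
      by (rule punctured_count_step_not_dvd[OF False]) simp
    then show ?thesis
      using Nsub_punctured_step_not_dvd[OF False, of b] IH by linarith
  next
    case True
    have "real (Suc k) * ?A (Suc k) = real (Suc k) * ?f (Suc k)"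
      using Nsub_punctured_step_dvd[OF True Suc.prems, of b]
            punctured_count_step_dvd[OF True finite_imp_CHAR_pos Suc.prems] IH
      by simp
    then show ?thesis by simp
  qed
qed

theorem theorem1p2:
  fixes b :: "'a::{finite,field}"
  defines "q \<equiv> CARD('a)" and "p \<equiv> CHAR('a)"
  shows "(\<forall>k. 1 \<le> k \<and> k \<le> q - 1 \<longrightarrow>
            real (Nsub k b (UNIV - {0})) =
              1 / real q * real ((q - 1) choose k)
              + (-1) ^ (k + k div p) * (vq b / real q)
                * ((real q / real p - 1) gchoose (k div p)))
       \<and> (\<forall>k. 1 \<le> k \<and> k \<le> q \<and> \<not> p dvd k \<longrightarrow>
            real (Nsub k b (UNIV :: 'a set)) = 1 / real q * real (q choose k))
       \<and> (\<forall>k. 1 \<le> k \<and> k \<le> q \<and> p dvd k \<longrightarrow>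
            real (Nsub k b (UNIV :: 'a set)) =
              1 / real q * real (q choose k)
              + (-1) ^ (k + k div p) * (vq b / real q)
                * ((real q / real p) gchoose (k div p)))"
proof (intro conjI allI impI)
  have closed_form: "real (Nsub k b (UNIV - {0})) = punctured_count q p (vq b) k"
    if "k \<le> q" for k
    using Nsub_punctured_closed_form[of k b] that unfolding q_def p_def by simp
  fix k
  show "real (Nsub k b (UNIV - {0})) = 1 / real q * real ((q - 1) choose k)
          + (-1) ^ (k + k div p) * (vq b / real q) * ((real q / real p - 1) gchoose (k div p))"
    if "1 \<le> k \<and> k \<le> q - 1"
  proof -
    have "k \<le> q" using that by linarith
    then show ?thesis using closed_form[of k] by (simp add: punctured_count_def)
  qed
  show "real (Nsub k b UNIV) = 1 / real q * real (q choose k)"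
    if "1 \<le> k \<and> k \<le> q \<and> \<not> p dvd k"
    using Nsub_UNIV_not_dvd[of k b] that unfolding q_def p_def by simp
  show "real (Nsub k b UNIV) = 1 / real q * real (q choose k)
          + (-1) ^ (k + k div p) * (vq b / real q) * ((real q / real p) gchoose (k div p))"
    if "1 \<le> k \<and> k \<le> q \<and> p dvd k"
  proof -
    have "real (Nsub k b UNIV) = real (Nsub k b (UNIV - {0})) + real (Nsub (k - 1) b (UNIV - {0}))"
      using Nsub_remove_zero[of "UNIV::'a set" k b] that by simp
    also have "\<dots> = punctured_count q p (vq b) k + punctured_count q p (vq b) (k - 1)"
      using closed_form[of k] closed_form[of "k - 1"] that by (simp add: le_diff_conv)
    finally show ?thesis
      using punctured_count_add_pred[of p k q "vq b"] that unfolding q_def by simp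
  qed
qed

end
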